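(* Under the standing assumptions of the context, for any real $a<b$, $\|\widehat{\varphi_l}-\widehat{\varphi^M}\|_{C[a,b]}=O(\mu(l))$ as $l\to\infty$, where $\|\cdot\|_{C[a,b]}$ is the sup norm on $[a,b]$.
   Context: Fourier transform: $\widehat f(\omega)=\int_{\mathbb{R}}f(t)e^{-it\omega}\,dt$. Let $\theta$ be odd, non-decreasing, $C^2$, with $\theta(\omega)=\pi/4$ for $\omega>\pi/3$; fix $\pi/3\le\omega_0<\pi/2$. Meyer scaling function: $\widehat{\varphi^M}(\omega)=1$ for $|\omega|\le2\omega_0$, $=\cos(\frac\pi4+\theta(\frac{\pi}{3(\pi-2\omega_0)}(|\omega|-\pi)))$ for $2\omega_0<|\omega|\le2\pi-2\omega_0$, $=0$ otherwise. Meyer mask: $2\pi$-periodic $m^M$ with $m^M(\omega)=\widehat{\varphi^M}(2\omega)$ on $[-\pi,\pi]$. $\|\cdot\|_C$: sup norm on $[-\pi,\pi]$. A linear method of summation $(\lambda_{n,k})$ maps $f$ with Fourier coefficients $a_k,b_k$ to $u_n(f,\omega)=\frac{a_0}2+\sum_{k=1}^n\lambda_{n,k}(a_k\cos k\omega+b_k\sin k\omega)$. $m^M_l:=m^M/(\cos\frac\omega2)^{2l}$. Standing assumptions: a method and a sequence $n(l)$ are fixed with $u_l:=u_{n(l)}(m^M_l,\cdot)$, $u_{1,l}:=u_{n(l)}((m^M_l)',\cdot)$ satisfying $\alpha(l):=\|u_l-m^M_l\|_C=o(l^{-1})$, $\gamma(l):=\|u_{1,l}-(m^M_l)'\|_C=o(1)$,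 $u_l(\pi)\ne0$; $l_0$ is fixed with $\inf_{l\ge l_0}|u_l(0)|>0$ and $l\ge l_0$. $\mu(l):=l\alpha(l)+\gamma(l)$. $m_l(\omega):=(\cos\frac\omega2)^{2l}u_l(\omega)/u_l(0)$, $\widehat{\varphi_l}(\omega):=\prod_{j\ge1}m_l(\omega2^{-j})$. *)

theory Defs
  imports "HOL-Analysis.Analysis" "HOL-Library.Landau_Symbols"
begin

definition C2_fun :: "(real \<Rightarrow> real) \<Rightarrow> bool" where
  "C2_fun f \<longleftrightarrow> (\<exists>f1 f2. (\<forall>x. (f has_real_derivative f1 x) (at x)) \<and>
                            (\<forall>x. (f1 has_real_derivative f2 x) (at x)) \<and>
                            continuous_on UNIV f2)"

definition meyer_phi_hat :: "(real \<Rightarrow> real) \<Rightarrow> real \<Rightarrow> real \<Rightarrow> real" where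
  "meyer_phi_hat \<theta> \<omega>0 \<omega> =
     (if \<bar>\<omega>\<bar> \<le> 2 * \<omega>0 then 1
      else if \<bar>\<omega>\<bar> \<le> 2 * pi - 2 * \<omega>0
        then cos (pi / 4 + \<theta> (pi / (3 * (pi - 2 * \<omega>0)) * (\<bar>\<omega>\<bar> - pi)))
      else 0)"

definition red2pi :: "real \<Rightarrow> real" where
  "red2pi \<omega> = \<omega> - 2 * pi * of_int \<lfloor>(\<omega> + pi) / (2 * pi)\<rfloor>"

definition meyer_mask :: "(real \<Rightarrow> real) \<Rightarrow> real \<Rightarrow> real \<Rightarrow> real" where
  "meyer_mask \<theta> \<omega>0 \<omega> = meyer_phi_hat \<theta> \<omega>0 (2 * red2pi \<omega>)"

(* m^M_l = m^M / (cos(\<omega>/2))^(2l); at the zeros of the cosine m^M vanishes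
   in a neighbourhood, so the value 0 (x/0 = 0) is the continuous extension *)
definition meyer_mask_l :: "(real \<Rightarrow> real) \<Rightarrow> real \<Rightarrow> nat \<Rightarrow> real \<Rightarrow> real" where
  "meyer_mask_l \<theta> \<omega>0 l \<omega> = meyer_mask \<theta> \<omega>0 \<omega> / (cos (\<omega> / 2)) ^ (2 * l)"

definition fourier_a :: "(real \<Rightarrow> real) \<Rightarrow> nat \<Rightarrow> real" where
  "fourier_a f k = integral {-pi..pi} (\<lambda>t. f t * cos (real k * t)) / pi"

definition fourier_b :: "(real \<Rightarrow> real) \<Rightarrow> nat \<Rightarrow> real" where
  "fourier_b f k = integral {-pi..pi} (\<lambda>t. f t * sin (real k * t)) / pi"

definition sum_method :: "(nat \<Rightarrow> nat \<Rightarrow> real) \<Rightarrow> nat \<Rightarrow> (real \<Rightarrow> real) \<Rightarrow> real \<Rightarrow> real" where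
  "sum_method lam n f \<omega> = fourier_a f 0 / 2 +
     (\<Sum>k=1..n. lam n k * (fourier_a f k * cos (real k * \<omega>) + fourier_b f k * sin (real k * \<omega>)))"

definition sup_norm_on :: "real set \<Rightarrow> (real \<Rightarrow> real) \<Rightarrow> real" where
  "sup_norm_on S f = Sup ((\<lambda>\<omega>. \<bar>f \<omega>\<bar>) ` S)"

definition u_l :: "(real \<Rightarrow> real) \<Rightarrow> real \<Rightarrow> (nat \<Rightarrow> nat \<Rightarrow> real) \<Rightarrow> (nat \<Rightarrow> nat) \<Rightarrow> nat \<Rightarrow> real \<Rightarrow> real" where
  "u_l \<theta> \<omega>0 lam nl l = sum_method lam (nl l) (meyer_mask_l \<theta> \<omega>0 l)"

definition u1_l :: "(real \<Rightarrow> real) \<Rightarrow> real \<Rightarrow> (nat \<Rightarrow> nat \<Rightarrow> real) \<Rightarrow> (nat \<Rightarrow> nat) \<Rightarrow> nat \<Rightarrow> real \<Rightarrow> real" where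
  "u1_l \<theta> \<omega>0 lam nl l = sum_method lam (nl l) (deriv (meyer_mask_l \<theta> \<omega>0 l))"

definition alpha_l :: "(real \<Rightarrow> real) \<Rightarrow> real \<Rightarrow> (nat \<Rightarrow> nat \<Rightarrow> real) \<Rightarrow> (nat \<Rightarrow> nat) \<Rightarrow> nat \<Rightarrow> real" where
  "alpha_l \<theta> \<omega>0 lam nl l =
     sup_norm_on {-pi..pi} (\<lambda>\<omega>. u_l \<theta> \<omega>0 lam nl l \<omega> - meyer_mask_l \<theta> \<omega>0 l \<omega>)"

definition gamma_l :: "(real \<Rightarrow> real) \<Rightarrow> real \<Rightarrow> (nat \<Rightarrow> nat \<Rightarrow> real) \<Rightarrow> (nat \<Rightarrow> nat) \<Rightarrow> nat \<Rightarrow> real" where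
  "gamma_l \<theta> \<omega>0 lam nl l =
     sup_norm_on {-pi..pi} (\<lambda>\<omega>. u1_l \<theta> \<omega>0 lam nl l \<omega> - deriv (meyer_mask_l \<theta> \<omega>0 l) \<omega>)"

definition mu_l :: "(real \<Rightarrow> real) \<Rightarrow> real \<Rightarrow> (nat \<Rightarrow> nat \<Rightarrow> real) \<Rightarrow> (nat \<Rightarrow> nat) \<Rightarrow> nat \<Rightarrow> real" where
  "mu_l \<theta> \<omega>0 lam nl l = real l * alpha_l \<theta> \<omega>0 lam nl l + gamma_l \<theta> \<omega>0 lam nl l"

definition mask_m :: "(real \<Rightarrow> real) \<Rightarrow> real \<Rightarrow> (nat \<Rightarrow> nat \<Rightarrow> real) \<Rightarrow> (nat \<Rightarrow> nat) \<Rightarrow> nat \<Rightarrow> real \<Rightarrow> real" where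
  "mask_m \<theta> \<omega>0 lam nl l \<omega> =
     (cos (\<omega> / 2)) ^ (2 * l) * u_l \<theta> \<omega>0 lam nl l \<omega> / u_l \<theta> \<omega>0 lam nl l 0"

definition phi_hat_l :: "(real \<Rightarrow> real) \<Rightarrow> real \<Rightarrow> (nat \<Rightarrow> nat \<Rightarrow> real) \<Rightarrow> (nat \<Rightarrow> nat) \<Rightarrow> nat \<Rightarrow> real \<Rightarrow> real" where
  "phi_hat_l \<theta> \<omega>0 lam nl l \<omega> =
     (\<Prod>j. mask_m \<theta> \<omega>0 lam nl l (\<omega> / 2 ^ (Suc j)))"

end

theory Submission
  imports Defs
begin

text \<open>
  The Meyer window satisfies the refinement equation \<open>\<phi>\<^sup>M(2\<omega>) = m\<^sup>M(\<omega>) \<phi>\<^sup>M(\<omega>)\<close>, so on \<open>[a,b]\<close>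
  it equals the finite product \<open>\<Prod>j<J. m\<^sup>M(\<omega>/2\<^sup>j\<^sup>+\<^sup>1)\<close> as soon as \<open>2\<^sup>J \<ge> max |a| |b|\<close>,
  while \<open>\<phi>\<^sub>l\<close> is the infinite product of the factors \<open>m\<^sub>l(\<omega>/2\<^sup>j\<^sup>+\<^sup>1)\<close>. Since
  \<open>m\<^sup>M = cos\<^sup>2\<^sup>l(\<omega>/2) m\<^sup>M\<^sub>l\<close>, every factor satisfies \<open>|m\<^sub>l - m\<^sup>M| \<le> 2\<alpha>(l)/|u\<^sub>l(0)|\<close>. Near the
  origin \<open>m\<^sup>M = 1\<close>, so the derivative of \<open>cos\<^sup>2\<^sup>l(\<omega>/2) m\<^sup>M\<^sub>l\<close> vanishes there and the mean value
  theorem gives \<open>|m\<^sub>l(\<omega>) - 1| \<le> \<mu>(l) |\<omega>| / |u\<^sub>l(0)|\<close>. The first \<open>J\<close> factors therefore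
  contribute \<open>O(\<alpha>)\<close>, the tail a geometric series of size \<open>O(\<mu>)\<close>, and
  \<open>|\<Prod>p - \<Prod>q| \<le> exp(\<Sum>|p - q|) - 1\<close> (for \<open>|q| \<le> 1\<close>) turns this into \<open>O(\<mu>(l))\<close>.
\<close>

section \<open>Products of factors close to one\<close>

lemma abs_prod_diff_le:
  fixes p q e :: "nat \<Rightarrow> real"
  assumes q: "\<And>j. \<bar>q j\<bar> \<le> 1" and pq: "\<And>j. \<bar>p j - q j\<bar> \<le> e j"
  shows "\<bar>(\<Prod>j<N. p j) - (\<Prod>j<N. q j)\<bar> \<le> (\<Prod>j<N. 1 + e j) - 1"
proof (induction N)
  case 0
  then show ?case by simp
next
  case (Suc N)
  have e_nonneg: "0 \<le> e j" for j
    using pq[of j] by linarith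
  have prod_ge_1: "1 \<le> (\<Prod>j<N. 1 + e j)"
    by (rule prod_ge_1) (simp add: e_nonneg)
  have abs_prod_p: "\<bar>\<Prod>j<N. p j\<bar> \<le> (\<Prod>j<N. 1 + e j)"
    unfolding abs_prod using q pq by (intro prod_mono) (smt (verit))
  have "\<bar>(\<Prod>j<Suc N. p j) - (\<Prod>j<Suc N. q j)\<bar>
      = \<bar>(\<Prod>j<N. p j) * (p N - q N) + ((\<Prod>j<N. p j) - (\<Prod>j<N. q j)) * q N\<bar>"
    by (simp add: algebra_simps)
  also have "\<dots> \<le> \<bar>\<Prod>j<N. p j\<bar> * \<bar>p N - q N\<bar> + \<bar>(\<Prod>j<N. p j) - (\<Prod>j<N. q j)\<bar> * \<bar>q N\<bar>"
    by (metis abs_mult abs_triangle_ineq)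
  also have "\<dots> \<le> (\<Prod>j<N. 1 + e j) * e N + ((\<Prod>j<N. 1 + e j) - 1) * 1"
    using prod_ge_1 by (intro add_mono mult_mono abs_prod_p pq Suc q) auto
  also have "\<dots> = (\<Prod>j<Suc N. 1 + e j) - 1"
    by (simp add: algebra_simps)
  finally show ?case .
qed

lemma prod_one_plus_le_exp_sum:
  fixes e :: "nat \<Rightarrow> real"
  assumes "\<And>j. 0 \<le> e j"
  shows "(\<Prod>j<N. 1 + e j) \<le> exp (\<Sum>j<N. e j)"
  unfolding exp_sum[OF finite_lessThan]
  by (intro prod_mono) (use assms in \<open>auto simp: exp_ge_add_one_self add_nonneg_nonneg\<close>)

lemma exp_minus_one_le: "0 \<le> (s::real) \<Longrightarrow> exp s - 1 \<le> s * exp s"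
proof -
  assume "0 \<le> s"
  have "(1 - s) * exp s \<le> exp (-s) * exp s"
    using exp_ge_add_one_self[of "-s"] by (intro mult_right_mono) auto
  then show ?thesis
    by (simp add: exp_minus field_simps)
qed

lemma abs_prodinf_diff_le:
  fixes p q e :: "nat \<Rightarrow> real"
  assumes q: "\<And>j. \<bar>q j\<bar> \<le> 1" and pq: "\<And>j. \<bar>p j - q j\<bar> \<le> e j"
    and q_tail: "\<And>j. J \<le> j \<Longrightarrow> q j = 1" and sum_e: "\<And>N. (\<Sum>j<N. e j) \<le> S"
  shows "\<bar>prodinf p - (\<Prod>j<J. q j)\<bar> \<le> exp S - 1"
proof -
  have e_nonneg: "0 \<le> e j" for j
    using pq[of j] by linarith
  have partial: "\<bar>(\<Prod>j<N. p j) - (\<Prod>j<J. q j)\<bar> \<le> exp S - 1" if "J \<le> N" for N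
  proof -
    have "(\<Prod>j<N. q j) = (\<Prod>j<J. q j)"
      using that q_tail by (intro prod.mono_neutral_right) auto
    moreover have "\<bar>(\<Prod>j<N. p j) - (\<Prod>j<N. q j)\<bar> \<le> (\<Prod>j<N. 1 + e j) - 1"
      by (rule abs_prod_diff_le[OF q pq])
    moreover have "(\<Prod>j<N. 1 + e j) \<le> exp S"
      using prod_one_plus_le_exp_sum[where e = e and N = N, OF e_nonneg] sum_e[of N]
      by (meson exp_le_cancel_iff order_trans)
    ultimately show ?thesis by simp
  qed
  have "summable (\<lambda>j. norm (p j - 1))"
  proof (rule summable_comparison_test'[where N = J])
    show "summable e"
      using e_nonneg sum_e by (rule summableI_nonneg_bounded)
    show "norm (norm (p j - 1)) \<le> e j" if "J \<le> j" for j
      using pq[of j] q_tail[OF that] by simp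
  qed
  then have "convergent_prod p"
    by (intro abs_convergent_prod_imp_convergent_prod) (simp add: abs_convergent_prod_conv_summable)
  then have "(\<lambda>N. \<Prod>j<N. p j) \<longlonglongrightarrow> prodinf p"
    using convergent_prod_LIMSEQ LIMSEQ_lessThan_iff_atMost by blast
  then have "(\<lambda>N. \<bar>(\<Prod>j<N. p j) - (\<Prod>j<J. q j)\<bar>) \<longlonglongrightarrow> \<bar>prodinf p - (\<Prod>j<J. q j)\<bar>"
    by (intro tendsto_intros)
  then show ?thesis
    using partial by (intro LIMSEQ_le_const2) auto
qed

lemma sum_if_less_plus_geometric_le:
  fixes A B :: real
  assumes "0 \<le> A" and "0 \<le> B"
  shows "(\<Sum>j<N. (if j < J then A else 0) + B / 2 ^ Suc j) \<le> A * real J + B"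
proof -
  have "(\<Sum>j<N. if j < J then A else 0) = A * real (min N J)"
    by (induction N) (auto simp: min_def algebra_simps)
  also have "\<dots> \<le> A * real J"
    using assms(1) by (intro mult_left_mono) auto
  finally have head: "(\<Sum>j<N. if j < J then A else 0) \<le> A * real J" .
  have geometric: "(\<Sum>j<N. 1 / (2::real) ^ Suc j) = 1 - 1 / 2 ^ N"
    by (induction N) (auto simp: field_simps)
  have "(\<Sum>j<N. B / 2 ^ Suc j) = B * (\<Sum>j<N. 1 / 2 ^ Suc j)"
    by (simp add: sum_distrib_left)
  also have "\<dots> = B * (1 - 1 / 2 ^ N)"
    by (simp only: geometric)
  also have "\<dots> \<le> B"
    using assms(2) by (intro mult_left_le) auto
  finally have tail: "(\<Sum>j<N. B / 2 ^ Suc j) \<le> B" .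
  show ?thesis
    using head tail by (simp add: sum.distrib)
qed

lemma abs_divide_2_pow_Suc_le:
  fixes w :: real
  assumes "\<bar>w\<bar> \<le> 2 ^ J" and "J \<le> j"
  shows "\<bar>w / 2 ^ Suc j\<bar> \<le> 1 / 2"
proof -
  have "\<bar>w / 2 ^ Suc j\<bar> \<le> 2 ^ J / 2 ^ Suc j"
    using assms(1) by (simp add: divide_right_mono)
  also have "\<dots> \<le> 2 ^ j / 2 ^ Suc j"
    using assms(2) by (intro divide_right_mono power_increasing) auto
  also have "(2::real) ^ j / 2 ^ Suc j = 1 / 2"
    by simp
  finally show ?thesis .
qed

lemma abs_le_sup_norm_on:
  assumes "\<And>x. x \<in> S \<Longrightarrow> \<bar>f x\<bar> \<le> B" and "x \<in> S"
  shows "\<bar>f x\<bar> \<le> sup_norm_on S f"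
  unfolding sup_norm_on_def using assms by (intro cSup_upper imageI bdd_aboveI2)

lemma sup_norm_on_le:
  assumes "S \<noteq> {}" and "\<And>x. x \<in> S \<Longrightarrow> \<bar>f x\<bar> \<le> B"
  shows "sup_norm_on S f \<le> B"
  unfolding sup_norm_on_def using assms by (intro cSup_least) blast+

lemma continuous_on_compact_abs_bounded:
  fixes f :: "real \<Rightarrow> real"
  assumes "continuous_on S f" and "compact S"
  obtains B where "\<And>x. x \<in> S \<Longrightarrow> \<bar>f x\<bar> \<le> B"
  using compact_imp_bounded[OF compact_continuous_image[OF assms]]
  unfolding bounded_iff by auto

lemma cos_minus_2pi_int: "cos (x - 2 * pi * of_int n) = cos x"
  and sin_minus_2pi_int: "sin (x - 2 * pi * of_int n) = sin x"
  by (simp_all add: cos_diff sin_diff)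

lemma red2pi_eq_self: "-pi \<le> x \<Longrightarrow> x < pi \<Longrightarrow> red2pi x = x"
  unfolding red2pi_def by (subst floor_unique[of 0]) (auto simp: field_simps)

lemma red2pi_bounds: "-pi \<le> red2pi x \<and> red2pi x < pi"
proof -
  define q where "q = (x + pi) / (2 * pi)"
  have "of_int \<lfloor>q\<rfloor> \<le> q" "q < of_int \<lfloor>q\<rfloor> + 1"
    by linarith+
  then have "2 * pi * of_int \<lfloor>q\<rfloor> \<le> 2 * pi * q" "2 * pi * q < 2 * pi * (of_int \<lfloor>q\<rfloor> + 1)"
    by (intro mult_left_mono mult_strict_left_mono; simp)+
  moreover have "2 * pi * q = x + pi"
    by (simp add: q_def)
  ultimately have "2 * pi * of_int \<lfloor>q\<rfloor> \<le> x + pi" "x + pi < 2 * pi * (of_int \<lfloor>q\<rfloor> + 1)"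
    by simp_all
  then show ?thesis
    unfolding red2pi_def q_def[symmetric] by (auto simp: algebra_simps)
qed

lemma red2pi_eq_minus_2pi_int: "\<exists>n::int. red2pi x = x - 2 * pi * of_int n"
  by (auto simp: red2pi_def)

section \<open>Fourier coefficients of a derivative\<close>

lemma integral_deriv_mult_periodic:
  fixes f f' g g' :: "real \<Rightarrow> real"
  assumes f': "\<And>x. x \<in> {-pi..pi} \<Longrightarrow> (f has_real_derivative f' x) (at x)"
    and g': "\<And>x. (g has_real_derivative g' x) (at x)" and g'_cont: "continuous_on {-pi..pi} g'"
    and periodic: "f (-pi) * g (-pi) = f pi * g pi"
  shows "integral {-pi..pi} (\<lambda>t. deriv f t * g t) = - integral {-pi..pi} (\<lambda>t. f t * g' t)"
proof -
  have "continuous_on {-pi..pi} f"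
    using f' by (meson DERIV_isCont continuous_at_imp_continuous_on)
  then have "(\<lambda>t. f t * g' t) integrable_on {-pi..pi}"
    by (intro integrable_continuous_interval continuous_intros g'_cont)
  moreover have "((\<lambda>t. f' t * g t + f t * g' t) has_integral f pi * g pi - f (-pi) * g (-pi)) {-pi..pi}"
  proof (intro fundamental_theorem_of_calculus ballI)
    fix t :: real
    assume "t \<in> {-pi..pi}"
    from DERIV_mult[OF f'[OF this] g'[of t]]
    show "((\<lambda>t. f t * g t) has_vector_derivative f' t * g t + f t * g' t) (at t within {-pi..pi})"
      by (auto simp: has_real_derivative_iff_has_vector_derivative[symmetric] mult.commute
          intro: has_field_derivative_at_within)
  qed simp
  ultimately have "((\<lambda>t. (f' t * g t + f t * g' t) - f t * g' t) has_integral
      0 - integral {-pi..pi} (\<lambda>t. f t * g' t)) {-pi..pi}"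
    using periodic by (intro has_integral_diff integrable_integral) auto
  then have "integral {-pi..pi} (\<lambda>t. f' t * g t) = - integral {-pi..pi} (\<lambda>t. f t * g' t)"
    by (simp add: integral_unique)
  moreover have "integral {-pi..pi} (\<lambda>t. deriv f t * g t) = integral {-pi..pi} (\<lambda>t. f' t * g t)"
    by (rule integral_cong) (simp add: DERIV_imp_deriv[OF f'])
  ultimately show ?thesis
    by simp
qed

lemma fourier_coeffs_deriv:
  fixes f f' :: "real \<Rightarrow> real"
  assumes f': "\<And>x. x \<in> {-pi..pi} \<Longrightarrow> (f has_real_derivative f' x) (at x)"
    and periodic: "f (-pi) = f pi"
  shows "fourier_a (deriv f) k = real k * fourier_b f k"
    and "fourier_b (deriv f) k = - real k * fourier_a f k"
proof -
  have pull: "integral {-pi..pi} (\<lambda>t. f t * (c * h t)) = c * integral {-pi..pi} (\<lambda>t. f t * h t)"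
    for c :: real and h
    using integral_cmul[of "{-pi..pi}" c "\<lambda>t. f t * h t"] by (simp add: mult.left_commute)
  have "integral {-pi..pi} (\<lambda>t. deriv f t * cos (real k * t))
      = - integral {-pi..pi} (\<lambda>t. f t * (- real k * sin (real k * t)))"
    using periodic
    by (intro integral_deriv_mult_periodic[OF f']) (auto intro!: derivative_eq_intros continuous_intros)
  then show "fourier_a (deriv f) k = real k * fourier_b f k"
    unfolding pull by (simp add: fourier_a_def fourier_b_def)
  have "integral {-pi..pi} (\<lambda>t. deriv f t * sin (real k * t))
      = - integral {-pi..pi} (\<lambda>t. f t * (real k * cos (real k * t)))"
    using periodic
    by (intro integral_deriv_mult_periodic[OF f']) (auto intro!: derivative_eq_intros continuous_intros)
  then show "fourier_b (deriv f) k = - real k * fourier_a f k"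
    unfolding pull by (simp add: fourier_a_def fourier_b_def)
qed

lemma sum_method_has_real_derivative:
  fixes f f' :: "real \<Rightarrow> real"
  assumes f': "\<And>x. x \<in> {-pi..pi} \<Longrightarrow> (f has_real_derivative f' x) (at x)"
    and periodic: "f (-pi) = f pi"
  shows "(sum_method lam n f has_real_derivative sum_method lam n (deriv f) x) (at x)"
proof -
  have "(sum_method lam n f has_real_derivative
      (\<Sum>k=1..n. lam n k * (fourier_a f k * (- sin (real k * x) * real k)
        + fourier_b f k * (cos (real k * x) * real k)))) (at x)"
    unfolding sum_method_def[abs_def] by (auto intro!: derivative_eq_intros sum.cong simp: algebra_simps)
  moreover have "(\<Sum>k=1..n. lam n k * (fourier_a f k * (- sin (real k * x) * real k)
        + fourier_b f k * (cos (real k * x) * real k)))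
      = (\<Sum>k=1..n. lam n k * (fourier_a (deriv f) k * cos (real k * x)
        + fourier_b (deriv f) k * sin (real k * x)))"
    by (intro sum.cong refl) (simp only: fourier_coeffs_deriv[OF f' periodic], simp add: algebra_simps)
  moreover have "fourier_a (deriv f) 0 = 0"
    using fourier_coeffs_deriv(1)[OF f' periodic, of 0] by simp
  ultimately show ?thesis
    unfolding sum_method_def by simp
qed

definition cos_half_pow :: "nat \<Rightarrow> real \<Rightarrow> real" where
  "cos_half_pow l x = cos (x / 2) ^ (2 * l)"

definition cos_half_pow' :: "nat \<Rightarrow> real \<Rightarrow> real" where
  "cos_half_pow' l x = real l * ((1 + cos x) / 2) ^ (l - 1) * (- sin x / 2)"

lemma cos_half_pow_eq: "cos_half_pow l x = ((1 + cos x) / 2) ^ l"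
proof -
  have "cos (x / 2) ^ 2 = (1 + cos x) / 2"
    using cos_double_cos[of "x / 2"] by simp
  then show ?thesis
    by (simp only: cos_half_pow_def power_mult)
qed

lemma cos_half_pow_0 [simp]: "cos_half_pow l 0 = 1"
  by (simp add: cos_half_pow_def)

lemma cos_half_pow_minus_2pi_int: "cos_half_pow l (x - 2 * pi * of_int n) = cos_half_pow l x"
  by (simp add: cos_half_pow_eq cos_minus_2pi_int)

lemma cos_half_pow_bounds: "0 \<le> cos_half_pow l x \<and> cos_half_pow l x \<le> 1"
proof -
  have "0 \<le> 1 + cos x" "1 + cos x \<le> 2"
    using cos_ge_minus_one[of x] cos_le_one[of x] by linarith+
  then have "0 \<le> (1 + cos x) / 2" "(1 + cos x) / 2 \<le> 1"
    by simp_all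
  then show ?thesis
    unfolding cos_half_pow_eq by (simp add: power_le_one)
qed

lemma cos_half_pow_pos: "\<bar>x\<bar> < pi \<Longrightarrow> 0 < cos_half_pow l x"
  unfolding cos_half_pow_def by (intro zero_less_power cos_gt_zero_pi) auto

lemma cos_half_pow_has_real_derivative:
  "(cos_half_pow l has_real_derivative cos_half_pow' l x) (at x)"
  unfolding cos_half_pow_eq[abs_def] cos_half_pow'_def by (auto intro!: derivative_eq_intros)

lemma abs_cos_half_pow'_le: "\<bar>cos_half_pow' l x\<bar> \<le> real l"
proof -
  have "\<bar>((1 + cos x) / 2) ^ (l - 1)\<bar> \<le> 1"
    using cos_half_pow_bounds[of "l - 1" x] by (simp add: cos_half_pow_eq)
  moreover have "\<bar>- sin x / 2\<bar> \<le> 1"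
    using abs_sin_le_one[of x] by (simp del: abs_sin_le_one)
  ultimately have "real l * (\<bar>((1 + cos x) / 2) ^ (l - 1)\<bar> * \<bar>- sin x / 2\<bar>) \<le> real l * (1 * 1)"
    by (intro mult_left_mono mult_mono) auto
  then show ?thesis
    by (simp add: cos_half_pow'_def abs_mult)
qed

lemma continuous_on_cos_half_pow [continuous_intros]:
  fixes g :: "real \<Rightarrow> real"
  assumes "continuous_on S g"
  shows "continuous_on S (\<lambda>x. cos_half_pow l (g x))"
    and "continuous_on S (\<lambda>x. cos_half_pow' l (g x))"
  unfolding cos_half_pow_def cos_half_pow'_def by (auto intro!: continuous_intros assms)

section \<open>The Meyer window and its mask\<close>

locale meyer_window =
  fixes \<theta> \<theta>' :: "real \<Rightarrow> real" and \<omega>0 :: real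
  assumes theta_odd: "\<And>x. \<theta> (- x) = - \<theta> x"
    and theta_mono: "mono \<theta>"
    and theta_has_derivative: "\<And>x. (\<theta> has_real_derivative \<theta>' x) (at x)"
    and theta'_continuous: "continuous_on UNIV \<theta>'"
    and theta_const: "\<And>x. x > pi / 3 \<Longrightarrow> \<theta> x = pi / 4"
    and omega0_ge: "pi / 3 \<le> \<omega>0" and omega0_less: "\<omega>0 < pi / 2"
begin

abbreviation "phi_M \<equiv> meyer_phi_hat \<theta> \<omega>0"
abbreviation "m_M \<equiv> meyer_mask \<theta> \<omega>0"
abbreviation "m_M_l \<equiv> meyer_mask_l \<theta> \<omega>0"

lemma theta_continuous: "continuous_on UNIV \<theta>"
  by (meson DERIV_isCont continuous_at_imp_continuous_on theta_has_derivative)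

lemma continuous_on_theta [continuous_intros]:
  fixes g :: "real \<Rightarrow> real"
  shows "continuous_on S g \<Longrightarrow> continuous_on S (\<lambda>x. \<theta> (g x))"
    and "continuous_on S g \<Longrightarrow> continuous_on S (\<lambda>x. \<theta>' (g x))"
  by (rule continuous_on_compose2[OF theta_continuous]; simp)
    (rule continuous_on_compose2[OF theta'_continuous]; simp)

lemma theta_eq_pi_4: "pi / 3 \<le> x \<Longrightarrow> \<theta> x = pi / 4"
proof -
  have lim: "(\<lambda>n. \<theta> (pi / 3 + inverse (real (Suc n)))) \<longlonglongrightarrow> \<theta> (pi / 3 + 0)"
    by (intro isCont_tendsto_compose[OF DERIV_isCont[OF theta_has_derivative]]
        tendsto_add tendsto_const LIMSEQ_inverse_real_of_nat)
  have const: "\<theta> (pi / 3 + inverse (real (Suc n))) = pi / 4" for n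
    by (intro theta_const) simp
  have "(\<lambda>n. \<theta> (pi / 3 + inverse (real (Suc n)))) \<longlonglongrightarrow> pi / 4"
    unfolding const by (rule tendsto_const)
  with lim have "\<theta> (pi / 3) = pi / 4"
    by (metis LIMSEQ_unique add_0_right)
  then show "pi / 3 \<le> x \<Longrightarrow> \<theta> x = pi / 4"
    using theta_const by (metis order_le_less)
qed

lemma theta_eq_minus_pi_4: "x \<le> - pi / 3 \<Longrightarrow> \<theta> x = - pi / 4"
  using theta_eq_pi_4[of "- x"] theta_odd[of x] by simp

lemma theta_bounds: "- pi / 4 \<le> \<theta> x \<and> \<theta> x \<le> pi / 4"
proof -
  have "\<theta> (- \<bar>x\<bar> - pi / 3) \<le> \<theta> x" "\<theta> x \<le> \<theta> (\<bar>x\<bar> + pi / 3)"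
    using pi_gt_zero by (intro monoD[OF theta_mono]; linarith)+
  then show ?thesis
    using theta_eq_pi_4[of "\<bar>x\<bar> + pi / 3"] theta_eq_minus_pi_4[of "- \<bar>x\<bar> - pi / 3"] by auto
qed

definition slope :: real where
  "slope = pi / (3 * (pi - 2 * \<omega>0))"

definition ramp :: "real \<Rightarrow> real" where
  "ramp s = cos (pi / 4 + \<theta> (slope * (s - pi)))"

definition ramp' :: "real \<Rightarrow> real" where
  "ramp' s = - sin (pi / 4 + \<theta> (slope * (s - pi))) * (\<theta>' (slope * (s - pi)) * slope)"

lemma slope_pos: "0 < slope"
  using omega0_less by (simp add: slope_def)

lemma ramp_eq_1: "s \<le> 2 * \<omega>0 \<Longrightarrow> ramp s = 1"
proof -
  assume "s \<le> 2 * \<omega>0"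
  then have "slope * (s - pi) \<le> slope * (2 * \<omega>0 - pi)"
    using slope_pos by (intro mult_left_mono) auto
  also have "slope * (2 * \<omega>0 - pi) = - pi / 3"
    using omega0_less by (simp add: slope_def field_simps)
  finally show ?thesis
    using theta_eq_minus_pi_4 by (simp add: ramp_def)
qed

lemma ramp_eq_0: "2 * pi - 2 * \<omega>0 \<le> s \<Longrightarrow> ramp s = 0"
proof -
  assume "2 * pi - 2 * \<omega>0 \<le> s"
  then have "slope * (pi - 2 * \<omega>0) \<le> slope * (s - pi)"
    using slope_pos by (intro mult_left_mono) auto
  moreover have "slope * (pi - 2 * \<omega>0) = pi / 3"
    using omega0_less by (simp add: slope_def field_simps)
  ultimately have "\<theta> (slope * (s - pi)) = pi / 4"
    using theta_eq_pi_4 by simp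
  then have "pi / 4 + \<theta> (slope * (s - pi)) = pi / 2"
    by simp
  then show ?thesis
    by (simp only: ramp_def cos_pi_half)
qed

lemma ramp_bounds: "0 \<le> ramp s \<and> ramp s \<le> 1"
  using theta_bounds[of "slope * (s - pi)"] unfolding ramp_def by (auto intro!: cos_ge_zero)

lemma ramp_has_real_derivative: "(ramp has_real_derivative ramp' s) (at s)"
proof -
  have "((\<lambda>s. \<theta> (slope * (s - pi))) has_real_derivative \<theta>' (slope * (s - pi)) * slope) (at s)"
    by (rule DERIV_chain2[OF theta_has_derivative]) (auto intro!: derivative_eq_intros)
  from DERIV_cos[THEN DERIV_chain2, OF DERIV_add[OF DERIV_const this]]
  show ?thesis
    unfolding ramp_def[abs_def] ramp'_def by simp
qed

lemma continuous_on_ramp [continuous_intros]: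
  fixes g :: "real \<Rightarrow> real"
  shows "continuous_on S g \<Longrightarrow> continuous_on S (\<lambda>x. ramp (g x))"
    and "continuous_on S g \<Longrightarrow> continuous_on S (\<lambda>x. ramp' (g x))"
  unfolding ramp_def ramp'_def by (auto intro!: continuous_intros)

lemma meyer_phi_hat_eq_ramp: "phi_M s = ramp s * ramp (- s)"
proof -
  have "phi_M s = ramp \<bar>s\<bar>"
    using ramp_eq_1[of "\<bar>s\<bar>"] ramp_eq_0[of "\<bar>s\<bar>"]
    by (simp add: meyer_phi_hat_def ramp_def slope_def)
  moreover have "ramp (- \<bar>s\<bar>) = 1"
    using omega0_ge pi_gt_zero by (intro ramp_eq_1) linarith
  ultimately show ?thesis
    by (cases "0 \<le> s") auto
qed

lemma meyer_phi_hat_eq_1: "\<bar>s\<bar> \<le> 2 * \<omega>0 \<Longrightarrow> phi_M s = 1"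
  by (simp add: meyer_phi_hat_def)

lemma meyer_phi_hat_eq_0: "2 * pi - 2 * \<omega>0 \<le> \<bar>s\<bar> \<Longrightarrow> phi_M s = 0"
  using ramp_eq_0[of s] ramp_eq_0[of "- s"] meyer_phi_hat_eq_ramp by (cases "0 \<le> s") auto

lemma meyer_phi_hat_bounds: "0 \<le> phi_M s \<and> phi_M s \<le> 1"
  using ramp_bounds[of s] ramp_bounds[of "- s"] by (simp add: meyer_phi_hat_eq_ramp mult_le_one)

lemma meyer_phi_hat_minus: "phi_M (- s) = phi_M s"
  by (simp add: meyer_phi_hat_def)

definition meyer_phi_hat' :: "real \<Rightarrow> real" where
  "meyer_phi_hat' s = ramp' s * ramp (- s) - ramp s * ramp' (- s)"

lemma meyer_phi_hat_has_real_derivative: "(phi_M has_real_derivative meyer_phi_hat' s) (at s)"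
  unfolding meyer_phi_hat_eq_ramp[abs_def] meyer_phi_hat'_def
  by (auto intro!: derivative_eq_intros DERIV_chain2[OF ramp_has_real_derivative])

lemma continuous_on_meyer_phi_hat [continuous_intros]:
  fixes g :: "real \<Rightarrow> real"
  shows "continuous_on S g \<Longrightarrow> continuous_on S (\<lambda>x. phi_M (g x))"
    and "continuous_on S g \<Longrightarrow> continuous_on S (\<lambda>x. meyer_phi_hat' (g x))"
  unfolding meyer_phi_hat_eq_ramp meyer_phi_hat'_def by (auto intro!: continuous_intros)

lemma meyer_mask_eq_phi_hat:
  assumes "- pi \<le> x - 2 * pi * of_int n" and "x - 2 * pi * of_int n \<le> pi"
  shows "m_M x = phi_M (2 * (x - 2 * pi * of_int n))"
proof (cases "x - 2 * pi * of_int n = pi")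
  case False
  then have "\<lfloor>(x + pi) / (2 * pi)\<rfloor> = n"
    using assms by (intro floor_unique) (auto simp: field_simps)
  then show ?thesis
    by (simp add: meyer_mask_def red2pi_def)
next
  case True
  then have "\<lfloor>(x + pi) / (2 * pi)\<rfloor> = n + 1"
    by (intro floor_unique) (auto simp: field_simps)
  then have "red2pi x = - pi"
    using True by (simp add: red2pi_def algebra_simps)
  then show ?thesis
    using True by (simp add: meyer_mask_def meyer_phi_hat_minus)
qed

lemma meyer_mask_eq_phi_hat_0: "\<bar>x\<bar> \<le> pi \<Longrightarrow> m_M x = phi_M (2 * x)"
  using meyer_mask_eq_phi_hat[of x 0] by simp

lemma meyer_mask_bounds: "0 \<le> m_M x \<and> m_M x \<le> 1"
  by (simp add: meyer_mask_def meyer_phi_hat_bounds)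

lemma meyer_mask_eq_1: "\<bar>x\<bar> \<le> \<omega>0 \<Longrightarrow> m_M x = 1"
  using omega0_less by (simp add: meyer_mask_eq_phi_hat_0 meyer_phi_hat_eq_1)

lemma meyer_mask_eq_0:
  assumes "pi - \<omega>0 \<le> \<bar>x\<bar>" and "\<bar>x\<bar> \<le> pi + \<omega>0"
  shows "m_M x = 0"
proof -
  consider "\<bar>x\<bar> \<le> pi" | "pi < x" | "x < - pi"
    by linarith
  then show ?thesis
  proof cases
    case 1
    then show ?thesis
      using assms by (simp add: meyer_mask_eq_phi_hat_0 meyer_phi_hat_eq_0)
  next
    case 2
    then have "m_M x = phi_M (2 * (x - 2 * pi * of_int 1))"
      using assms omega0_less by (intro meyer_mask_eq_phi_hat) auto
    then show ?thesis
      using 2 assms by (simp add: meyer_phi_hat_eq_0)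
  next
    case 3
    then have "m_M x = phi_M (2 * (x - 2 * pi * of_int (- 1)))"
      using assms omega0_less by (intro meyer_mask_eq_phi_hat) auto
    then show ?thesis
      using 3 assms by (simp add: meyer_phi_hat_eq_0)
  qed
qed

lemma meyer_phi_hat_refinement: "phi_M (2 * y) = m_M y * phi_M y"
proof (cases "\<bar>y\<bar> \<le> 2 * \<omega>0")
  case True
  then show ?thesis
    using omega0_less by (simp add: meyer_mask_eq_phi_hat_0 meyer_phi_hat_eq_1)
next
  case False
  then have "phi_M (2 * y) = 0"
    using omega0_ge by (intro meyer_phi_hat_eq_0) auto
  moreover have "m_M y = 0 \<or> phi_M y = 0"
  proof (cases "2 * pi - 2 * \<omega>0 \<le> \<bar>y\<bar>")
    case True
    then show ?thesis
      by (simp add: meyer_phi_hat_eq_0)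
  next
    case outside: False
    show ?thesis
      using False outside omega0_ge by (intro disjI1 meyer_mask_eq_0) auto
  qed
  ultimately show ?thesis
    by auto
qed

lemma meyer_phi_hat_eq_prod: "phi_M w = (\<Prod>j<N. m_M (w / 2 ^ Suc j)) * phi_M (w / 2 ^ N)"
proof (induction N)
  case 0
  then show ?case by simp
next
  case (Suc N)
  have "phi_M (w / 2 ^ N) = m_M (w / 2 ^ Suc N) * phi_M (w / 2 ^ Suc N)"
    using meyer_phi_hat_refinement[of "w / 2 ^ Suc N"] by simp
  then show ?case
    using Suc by (simp add: mult.assoc)
qed

lemma meyer_mask_eq_cos_half_pow_mult: "m_M x = cos_half_pow l x * m_M_l l x"
proof (cases "cos_half_pow l x = 0")
  case False
  then show ?thesis
    by (simp add: meyer_mask_l_def cos_half_pow_def)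
next
  case True
  text \<open>The cosine only vanishes at odd multiples of \<open>\<pi>\<close>, where \<open>m\<^sup>M\<close> vanishes too.\<close>
  obtain n where n: "red2pi x = x - 2 * pi * of_int n"
    using red2pi_eq_minus_2pi_int by blast
  have "m_M x = 0"
  proof (rule ccontr)
    assume "m_M x \<noteq> 0"
    then have "phi_M (2 * red2pi x) \<noteq> 0"
      by (simp add: meyer_mask_def)
    then have "\<bar>2 * red2pi x\<bar> < 2 * pi - 2 * \<omega>0"
      using meyer_phi_hat_eq_0 by (meson not_le)
    then have "\<bar>red2pi x\<bar> < pi"
      using omega0_ge by simp
    then have "0 < cos_half_pow l (red2pi x)"
      by (rule cos_half_pow_pos)
    then show False
      using True n cos_half_pow_minus_2pi_int[of l x n] by simp
  qed
  then show ?thesis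
    using True by simp
qed

lemma meyer_mask_l_eq: "\<bar>x\<bar> < pi \<Longrightarrow> m_M_l l x = phi_M (2 * x) / cos_half_pow l x"
  by (simp add: meyer_mask_l_def meyer_mask_eq_phi_hat_0 cos_half_pow_def)

lemma meyer_mask_l_0 [simp]: "m_M_l l 0 = 1"
proof -
  have "0 \<le> \<omega>0"
    using omega0_ge pi_gt_zero by linarith
  then show ?thesis
    by (simp add: meyer_mask_l_eq meyer_phi_hat_eq_1)
qed

lemma meyer_mask_l_minus_pi: "m_M_l l (- pi) = m_M_l l pi"
  by (simp add: meyer_mask_l_def meyer_mask_eq_phi_hat_0 meyer_phi_hat_minus)

lemma meyer_mask_l_eq_0: "pi - \<omega>0 < \<bar>x\<bar> \<Longrightarrow> \<bar>x\<bar> < pi + \<omega>0 \<Longrightarrow> m_M_l l x = 0"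
  by (simp add: meyer_mask_l_def meyer_mask_eq_0)

lemma meyer_mask_l_has_derivative_0:
  assumes "pi - \<omega>0 < \<bar>x\<bar>" and "\<bar>x\<bar> < pi + \<omega>0"
  shows "(m_M_l l has_real_derivative 0) (at x)"
proof (rule has_field_derivative_transform_within_open)
  define r where "r = min (\<bar>x\<bar> - (pi - \<omega>0)) (pi + \<omega>0 - \<bar>x\<bar>)"
  show "((\<lambda>_. 0) has_real_derivative 0) (at x)"
    by simp
  show "open (ball x r)"
    by simp
  show "x \<in> ball x r"
    using assms by (simp add: r_def)
  show "0 = m_M_l l y" if "y \<in> ball x r" for y
  proof -
    have "\<bar>x - y\<bar> < r"
      using that by (simp add: dist_real_def)
    then have "pi - \<omega>0 < \<bar>y\<bar>" "\<bar>y\<bar> < pi + \<omega>0"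
      using abs_triangle_ineq3[of x y] unfolding r_def by linarith+
    then show ?thesis
      by (simp add: meyer_mask_l_eq_0)
  qed
qed

definition meyer_mask_l' :: "nat \<Rightarrow> real \<Rightarrow> real" where
  "meyer_mask_l' l x = (if \<bar>x\<bar> < pi then
     (meyer_phi_hat' (2 * x) * 2 * cos_half_pow l x - phi_M (2 * x) * cos_half_pow' l x)
       / (cos_half_pow l x * cos_half_pow l x)
   else 0)"

lemma meyer_mask_l_has_real_derivative:
  assumes "\<bar>x\<bar> \<le> pi"
  shows "(m_M_l l has_real_derivative meyer_mask_l' l x) (at x)"
proof (cases "\<bar>x\<bar> < pi")
  case True
  have "cos_half_pow l x \<noteq> 0"
    using cos_half_pow_pos[OF True, of l] by simp
  from DERIV_divide[OF DERIV_chain2[OF meyer_phi_hat_has_real_derivative DERIV_cmult_Id]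
      cos_half_pow_has_real_derivative this]
  have "((\<lambda>x. phi_M (2 * x) / cos_half_pow l x) has_real_derivative meyer_mask_l' l x) (at x)"
    using True by (simp only: meyer_mask_l'_def if_True)
  then show ?thesis
    by (rule has_field_derivative_transform_within_open[of _ _ _ "{-pi<..<pi}"])
      (use True in \<open>auto simp: meyer_mask_l_eq\<close>)
next
  case False
  then have "meyer_mask_l' l x = 0"
    by (simp add: meyer_mask_l'_def)
  moreover have "(m_M_l l has_real_derivative 0) (at x)"
    using False assms omega0_ge omega0_less by (intro meyer_mask_l_has_derivative_0) auto
  ultimately show ?thesis
    by simp
qed

lemma meyer_mask_l'_eq_0: "pi - \<omega>0 < \<bar>x\<bar> \<Longrightarrow> meyer_mask_l' l x = 0"
proof (cases "\<bar>x\<bar> < pi")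
  case True
  assume "pi - \<omega>0 < \<bar>x\<bar>"
  then have "(m_M_l l has_real_derivative 0) (at x)"
    using True omega0_ge by (intro meyer_mask_l_has_derivative_0) auto
  moreover have "(m_M_l l has_real_derivative meyer_mask_l' l x) (at x)"
    using True by (intro meyer_mask_l_has_real_derivative) simp
  ultimately show ?thesis
    by (metis DERIV_unique)
qed (simp add: meyer_mask_l'_def)

lemma deriv_meyer_mask_l: "x \<in> {-pi..pi} \<Longrightarrow> deriv (m_M_l l) x = meyer_mask_l' l x"
  by (intro DERIV_imp_deriv meyer_mask_l_has_real_derivative) auto

lemma continuous_on_meyer_mask_l: "continuous_on {-pi..pi} (m_M_l l)"
  by (intro continuous_at_imp_continuous_on ballI DERIV_isCont[OF meyer_mask_l_has_real_derivative]) auto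

lemma meyer_mask_l'_bounded:
  obtains B where "\<And>x. x \<in> {-pi..pi} \<Longrightarrow> \<bar>meyer_mask_l' l x\<bar> \<le> B"
proof -
  let ?I = "{-(pi - \<omega>0)..pi - \<omega>0}"
  have "0 < \<omega>0"
    using omega0_ge pi_gt_zero by linarith
  then have inside: "\<bar>x\<bar> < pi" if "x \<in> ?I" for x
    using that by (auto simp: abs_less_iff)
  have nonzero: "cos_half_pow l x * cos_half_pow l x \<noteq> 0" if "x \<in> ?I" for x
    using cos_half_pow_pos[OF inside[OF that], of l] by simp
  have "continuous_on ?I (\<lambda>x. (meyer_phi_hat' (2 * x) * 2 * cos_half_pow l x - phi_M (2 * x) * cos_half_pow' l x)
      / (cos_half_pow l x * cos_half_pow l x))"
    using nonzero by (intro continuous_intros) auto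
  then have "continuous_on ?I (meyer_mask_l' l)"
    by (rule continuous_on_eq) (simp add: meyer_mask_l'_def inside)
  then obtain B where B: "\<And>x. x \<in> ?I \<Longrightarrow> \<bar>meyer_mask_l' l x\<bar> \<le> B"
    using continuous_on_compact_abs_bounded by blast
  have "\<bar>meyer_mask_l' l x\<bar> \<le> max B 0" for x
  proof (cases "x \<in> ?I")
    case True
    then show ?thesis
      using B by (meson max.coboundedI1)
  next
    case False
    then have "pi - \<omega>0 < \<bar>x\<bar>"
      by auto
    then show ?thesis
      by (simp add: meyer_mask_l'_eq_0)
  qed
  then show ?thesis
    using that by blast
qed

lemma cos_half_pow_mult_meyer_mask_l_deriv_eq_0:
  assumes "\<bar>t\<bar> < \<omega>0"
  shows "cos_half_pow' l t * m_M_l l t + cos_half_pow l t * meyer_mask_l' l t = 0"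
proof -
  have "\<bar>t\<bar> \<le> pi"
    using assms omega0_less by simp
  from DERIV_mult[OF cos_half_pow_has_real_derivative meyer_mask_l_has_real_derivative[OF this]]
  have "((\<lambda>t. cos_half_pow l t * m_M_l l t) has_real_derivative
      cos_half_pow' l t * m_M_l l t + cos_half_pow l t * meyer_mask_l' l t) (at t)"
    by (simp add: mult.commute)
  moreover have "((\<lambda>t. cos_half_pow l t * m_M_l l t) has_real_derivative 0) (at t)"
  proof (rule has_field_derivative_transform_within_open[of "\<lambda>_. 1" 0 t "{-\<omega>0<..<\<omega>0}"])
    show "1 = cos_half_pow l s * m_M_l l s" if "s \<in> {-\<omega>0<..<\<omega>0}" for s
    proof -
      have "\<bar>s\<bar> \<le> \<omega>0"
        using that by auto
      then show ?thesis
        using meyer_mask_eq_1 meyer_mask_eq_cos_half_pow_mult by metis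
    qed
  qed (use assms in auto)
  ultimately show ?thesis
    by (rule DERIV_unique)
qed

end

section \<open>Masks produced by the summation method\<close>

locale meyer_summation = meyer_window +
  fixes lam :: "nat \<Rightarrow> nat \<Rightarrow> real" and nl :: "nat \<Rightarrow> nat"
begin

abbreviation "u \<equiv> u_l \<theta> \<omega>0 lam nl"
abbreviation "u1 \<equiv> u1_l \<theta> \<omega>0 lam nl"
abbreviation "\<alpha> \<equiv> alpha_l \<theta> \<omega>0 lam nl"
abbreviation "\<gamma> \<equiv> gamma_l \<theta> \<omega>0 lam nl"
abbreviation "\<mu> \<equiv> mu_l \<theta> \<omega>0 lam nl"
abbreviation "m_l \<equiv> mask_m \<theta> \<omega>0 lam nl"

lemma u_has_real_derivative: "(u l has_real_derivative u1 l x) (at x)"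
  unfolding u_l_def u1_l_def
  by (rule sum_method_has_real_derivative[OF meyer_mask_l_has_real_derivative])
    (auto simp: meyer_mask_l_minus_pi)

lemma u_minus_2pi_int: "u l (x - 2 * pi * of_int n) = u l x"
proof -
  have "real k * (x - 2 * pi * of_int n) = real k * x - 2 * pi * of_int (int k * n)" for k
    by (simp add: algebra_simps)
  then show ?thesis
    unfolding u_l_def sum_method_def by (simp only: cos_minus_2pi_int sin_minus_2pi_int)
qed

lemma abs_u_minus_meyer_mask_l_le: "x \<in> {-pi..pi} \<Longrightarrow> \<bar>u l x - m_M_l l x\<bar> \<le> \<alpha> l"
proof -
  have "continuous_on {-pi..pi} (u l)"
    by (intro continuous_at_imp_continuous_on ballI DERIV_isCont[OF u_has_real_derivative])
  then have "continuous_on {-pi..pi} (\<lambda>x. u l x - m_M_l l x)"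
    using continuous_on_meyer_mask_l by (rule continuous_on_diff)
  then obtain B where "\<And>x. x \<in> {-pi..pi} \<Longrightarrow> \<bar>u l x - m_M_l l x\<bar> \<le> B"
    using continuous_on_compact_abs_bounded by blast
  then show "x \<in> {-pi..pi} \<Longrightarrow> ?thesis"
    unfolding alpha_l_def by (rule abs_le_sup_norm_on)
qed

lemma abs_u1_minus_meyer_mask_l'_le: "x \<in> {-pi..pi} \<Longrightarrow> \<bar>u1 l x - meyer_mask_l' l x\<bar> \<le> \<gamma> l"
proof -
  have "continuous_on {-pi..pi} (u1 l)"
    unfolding u1_l_def sum_method_def[abs_def] by (intro continuous_intros)
  then obtain B1 where B1: "\<And>x. x \<in> {-pi..pi} \<Longrightarrow> \<bar>u1 l x\<bar> \<le> B1"
    using continuous_on_compact_abs_bounded by blast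
  obtain B2 where B2: "\<And>x. x \<in> {-pi..pi} \<Longrightarrow> \<bar>meyer_mask_l' l x\<bar> \<le> B2"
    using meyer_mask_l'_bounded by blast
  have "\<bar>u1 l x - deriv (m_M_l l) x\<bar> \<le> B1 + B2" if "x \<in> {-pi..pi}" for x
    using B1[OF that] B2[OF that] deriv_meyer_mask_l[OF that] by simp
  then have "\<bar>u1 l x - deriv (m_M_l l) x\<bar> \<le> \<gamma> l" if "x \<in> {-pi..pi}" for x
    unfolding gamma_l_def using that by (rule abs_le_sup_norm_on)
  then show "x \<in> {-pi..pi} \<Longrightarrow> ?thesis"
    using deriv_meyer_mask_l by simp
qed

lemma alpha_nonneg: "0 \<le> \<alpha> l"
  using abs_u_minus_meyer_mask_l_le[of 0 l] by simp

lemma gamma_nonneg: "0 \<le> \<gamma> l"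
  using abs_u1_minus_meyer_mask_l'_le[of 0 l] by simp

lemma mask_m_eq: "m_l l x = cos_half_pow l x * u l x / u l 0"
  by (simp add: mask_m_def cos_half_pow_def)

lemma abs_mask_m_minus_meyer_mask_le:
  assumes "u l 0 \<noteq> 0"
  shows "\<bar>m_l l x - m_M x\<bar> \<le> 2 * \<alpha> l / \<bar>u l 0\<bar>"
proof -
  obtain n where n: "red2pi x = x - 2 * pi * of_int n"
    using red2pi_eq_minus_2pi_int by blast
  define y where "y = red2pi x"
  have y: "y \<in> {-pi..pi}"
    using red2pi_bounds[of x] by (auto simp: y_def)
  text \<open>Both masks are \<open>2\<pi>\<close>-periodic, so it suffices to compare them at \<open>y \<in> [-\<pi>, \<pi>]\<close>.\<close>
  have "m_l l x = m_l l y"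
    unfolding mask_m_eq y_def n by (simp add: cos_half_pow_minus_2pi_int u_minus_2pi_int)
  moreover have "m_M x = m_M y"
    using red2pi_bounds[of x] by (simp add: meyer_mask_def y_def red2pi_eq_self)
  moreover have "m_l l y - m_M y
      = (cos_half_pow l y * (u l y - m_M_l l y) + m_M y * (1 - u l 0)) / u l 0"
    using assms by (simp add: mask_m_eq meyer_mask_eq_cos_half_pow_mult[of y l] field_simps)
  moreover have "\<bar>cos_half_pow l y * (u l y - m_M_l l y)\<bar> \<le> 1 * \<alpha> l"
    unfolding abs_mult using cos_half_pow_bounds[of l y] abs_u_minus_meyer_mask_l_le[OF y]
    by (intro mult_mono) auto
  moreover have "\<bar>m_M y * (1 - u l 0)\<bar> \<le> 1 * \<alpha> l"
    unfolding abs_mult using meyer_mask_bounds[of y] abs_u_minus_meyer_mask_l_le[of 0 l]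
    by (intro mult_mono) (auto simp: abs_minus_commute)
  ultimately show ?thesis
    by (simp add: divide_right_mono)
qed

lemma abs_mask_m_minus_1_le:
  assumes x: "\<bar>x\<bar> \<le> 1" and nonzero: "u l 0 \<noteq> 0"
  shows "\<bar>m_l l x - 1\<bar> \<le> \<mu> l * \<bar>x\<bar> / \<bar>u l 0\<bar>"
proof -
  define w where "w t = cos_half_pow l t * u l t" for t
  define w' where "w' t = cos_half_pow' l t * u l t + cos_half_pow l t * u1 l t" for t
  have w_deriv: "(w has_real_derivative w' t) (at t within {-1..1})" for t
    unfolding w_def[abs_def] w'_def
    using DERIV_mult[OF cos_half_pow_has_real_derivative u_has_real_derivative]
    by (auto simp: algebra_simps intro: has_field_derivative_at_within)
  have w'_bound: "\<bar>w' t\<bar> \<le> \<mu> l" if "t \<in> {-1..1}" for t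
  proof -
    have t: "\<bar>t\<bar> < \<omega>0" "t \<in> {-pi..pi}"
      using that omega0_ge pi_gt3 by auto
    text \<open>Subtract \<open>(cos\<^sup>2\<^sup>l(t/2) m\<^sup>M\<^sub>l)'(t) = 0\<close>, valid since \<open>m\<^sup>M = 1\<close> near \<open>t\<close>.\<close>
    have "w' t = cos_half_pow' l t * (u l t - m_M_l l t) + cos_half_pow l t * (u1 l t - meyer_mask_l' l t)"
      using cos_half_pow_mult_meyer_mask_l_deriv_eq_0[OF t(1), of l] by (simp add: w'_def algebra_simps)
    moreover have "\<bar>cos_half_pow' l t * (u l t - m_M_l l t)\<bar> \<le> real l * \<alpha> l"
      unfolding abs_mult
      by (intro mult_mono abs_cos_half_pow'_le abs_u_minus_meyer_mask_l_le t) auto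
    moreover have "\<bar>cos_half_pow l t * (u1 l t - meyer_mask_l' l t)\<bar> \<le> 1 * \<gamma> l"
      unfolding abs_mult using cos_half_pow_bounds[of l t] abs_u1_minus_meyer_mask_l'_le[OF t(2)]
      by (intro mult_mono) auto
    ultimately show ?thesis
      unfolding mu_l_def by simp
  qed
  have "norm (w x - w 0) \<le> \<mu> l * norm (x - 0)"
    by (rule field_differentiable_bound[where S = "{-1..1}"])
      (use x w_deriv w'_bound in \<open>auto simp: convex_real_interval\<close>)
  moreover have "m_l l x - 1 = (w x - w 0) / u l 0"
    using nonzero by (simp add: mask_m_eq w_def field_simps)
  ultimately show ?thesis
    by (simp add: divide_right_mono)
qed

lemma mu_nonneg: "0 \<le> \<mu> l"
  using alpha_nonneg gamma_nonneg by (simp add: mu_l_def)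

lemma alpha_le_mu: "1 \<le> l \<Longrightarrow> \<alpha> l \<le> \<mu> l"
  using mult_right_mono[of 1 "real l" "\<alpha> l"] alpha_nonneg gamma_nonneg[of l] by (simp add: mu_l_def)

lemma abs_mask_m_minus_meyer_mask_dyadic_le:
  assumes c: "0 < c" "c \<le> \<bar>u l 0\<bar>" and w: "\<bar>w\<bar> \<le> 2 ^ J"
  shows "\<bar>m_l l (w / 2 ^ Suc j) - m_M (w / 2 ^ Suc j)\<bar>
    \<le> (if j < J then 2 * \<alpha> l / c else 0) + \<mu> l * 2 ^ J / c / 2 ^ Suc j"
proof (cases "j < J")
  case True
  have "\<bar>m_l l (w / 2 ^ Suc j) - m_M (w / 2 ^ Suc j)\<bar> \<le> 2 * \<alpha> l / \<bar>u l 0\<bar>"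
    using c by (intro abs_mask_m_minus_meyer_mask_le) auto
  also have "\<dots> \<le> 2 * \<alpha> l / c"
    using c alpha_nonneg[of l] by (intro divide_left_mono) auto
  moreover have "0 \<le> \<mu> l * 2 ^ J / c / 2 ^ Suc j"
    using mu_nonneg[of l] c by simp
  ultimately show ?thesis
    using True by simp
next
  case False
  then have small: "\<bar>w / 2 ^ Suc j\<bar> \<le> 1 / 2"
    using w by (intro abs_divide_2_pow_Suc_le) auto
  moreover have "1 / 2 \<le> \<omega>0"
    using omega0_ge pi_gt3 by linarith
  ultimately have "m_M (w / 2 ^ Suc j) = 1"
    by (intro meyer_mask_eq_1) linarith
  moreover have "\<bar>m_l l (w / 2 ^ Suc j) - 1\<bar> \<le> \<mu> l * \<bar>w / 2 ^ Suc j\<bar> / \<bar>u l 0\<bar>"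
    using small c by (intro abs_mask_m_minus_1_le) auto
  moreover have "\<dots> \<le> \<mu> l * (2 ^ J / 2 ^ Suc j) / c"
    using c mu_nonneg[of l] w by (intro frac_le mult_left_mono) (auto simp: divide_right_mono)
  ultimately show ?thesis
    using False by (simp add: mult_ac)
qed

lemma abs_phi_hat_l_minus_meyer_phi_hat_le:
  assumes c: "0 < c" "c \<le> \<bar>u l 0\<bar>" and w: "\<bar>w\<bar> \<le> 2 ^ J" and l: "1 \<le> l" and mu: "\<mu> l \<le> 1"
  defines "K \<equiv> (2 * real J + 2 ^ J) / c"
  shows "\<bar>phi_hat_l \<theta> \<omega>0 lam nl l w - phi_M w\<bar> \<le> K * exp K * \<mu> l"
proof -
  define q where "q j = m_M (w / 2 ^ Suc j)" for j
  define e where "e j = (if j < J then 2 * \<alpha> l / c else 0) + \<mu> l * 2 ^ J / c / 2 ^ Suc j" for j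
  have K_nonneg: "0 \<le> K"
    using c by (simp add: K_def)
  have "\<bar>q j\<bar> \<le> 1" for j
    using meyer_mask_bounds by (simp add: q_def)
  moreover have "\<bar>m_l l (w / 2 ^ Suc j) - q j\<bar> \<le> e j" for j
    unfolding q_def e_def using c w by (rule abs_mask_m_minus_meyer_mask_dyadic_le)
  moreover have "1 / 2 \<le> \<omega>0"
    using omega0_ge pi_gt3 by linarith
  then have "q j = 1" if "J \<le> j" for j
    unfolding q_def using abs_divide_2_pow_Suc_le[OF w that] by (intro meyer_mask_eq_1) linarith
  moreover have "(\<Sum>j<N. e j) \<le> K * \<mu> l" for N
  proof -
    have "(\<Sum>j<N. e j) \<le> 2 * \<alpha> l / c * real J + \<mu> l * 2 ^ J / c"
      unfolding e_def using c alpha_nonneg[of l] mu_nonneg[of l]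
      by (intro sum_if_less_plus_geometric_le) auto
    also have "\<dots> \<le> 2 * \<mu> l / c * real J + \<mu> l * 2 ^ J / c"
      using alpha_le_mu[OF l] c by (intro add_mono mult_right_mono divide_right_mono) auto
    also have "\<dots> = K * \<mu> l"
      by (simp add: K_def add_divide_distrib algebra_simps)
    finally show ?thesis .
  qed
  ultimately have "\<bar>phi_hat_l \<theta> \<omega>0 lam nl l w - (\<Prod>j<J. q j)\<bar> \<le> exp (K * \<mu> l) - 1"
    unfolding phi_hat_l_def by (rule abs_prodinf_diff_le)
  moreover have "\<bar>w / 2 ^ J\<bar> \<le> 1"
    using w by (simp add: divide_le_eq_1)
  then have "phi_M (w / 2 ^ J) = 1"
    using \<open>1 / 2 \<le> \<omega>0\<close> by (intro meyer_phi_hat_eq_1) linarith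
  then have "(\<Prod>j<J. q j) = phi_M w"
    using meyer_phi_hat_eq_prod[of w J] by (simp add: q_def)
  moreover have "exp (K * \<mu> l) - 1 \<le> K * \<mu> l * exp K"
    using exp_minus_one_le[of "K * \<mu> l"] K_nonneg mu_nonneg[of l] mu
      mult_left_mono[of "exp (K * \<mu> l)" "exp K" "K * \<mu> l"] mult_left_le[of "\<mu> l" K]
    by simp
  ultimately show ?thesis
    by (simp add: algebra_simps)
qed


lemma abs_sup_norm_phi_hat_l_minus_meyer_phi_hat_le:
  assumes ab: "a < b" and J: "max \<bar>a\<bar> \<bar>b\<bar> \<le> 2 ^ J" and c: "0 < c" "c \<le> \<bar>u l 0\<bar>"
    and l: "1 \<le> l" and mu: "\<mu> l \<le> 1"
  defines "K \<equiv> (2 * real J + 2 ^ J) / c"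
  shows "\<bar>sup_norm_on {a..b} (\<lambda>\<omega>. phi_hat_l \<theta> \<omega>0 lam nl l \<omega> - phi_M \<omega>)\<bar> \<le> K * exp K * \<mu> l"
proof -
  have bound: "\<bar>phi_hat_l \<theta> \<omega>0 lam nl l w - phi_M w\<bar> \<le> K * exp K * \<mu> l" if "w \<in> {a..b}" for w
  proof -
    have "\<bar>w\<bar> \<le> 2 ^ J"
      using that J by auto
    then show ?thesis
      unfolding K_def by (rule abs_phi_hat_l_minus_meyer_phi_hat_le[OF c _ l mu])
  qed
  let ?S = "sup_norm_on {a..b} (\<lambda>\<omega>. phi_hat_l \<theta> \<omega>0 lam nl l \<omega> - phi_M \<omega>)"
  have "\<bar>phi_hat_l \<theta> \<omega>0 lam nl l a - phi_M a\<bar> \<le> ?S"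
    by (rule abs_le_sup_norm_on[OF bound]) (use ab in auto)
  then have "0 \<le> ?S"
    by (rule order_trans[OF abs_ge_zero])
  moreover have "?S \<le> K * exp K * \<mu> l"
    by (rule sup_norm_on_le[OF _ bound]) (use ab in auto)
  ultimately show ?thesis
    by simp
qed

end

theorem lemma3:
  fixes \<theta> :: "real \<Rightarrow> real" and \<omega>0 :: real
    and lam :: "nat \<Rightarrow> nat \<Rightarrow> real" and nl :: "nat \<Rightarrow> nat" and l0 :: nat
    and a b :: real
  assumes theta_odd: "\<forall>x. \<theta> (- x) = - \<theta> x"
    and theta_mono: "mono \<theta>"
    and theta_C2: "C2_fun \<theta>"
    and theta_const: "\<forall>x. x > pi / 3 \<longrightarrow> \<theta> x = pi / 4"
    and omega0: "pi / 3 \<le> \<omega>0" "\<omega>0 < pi / 2"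
    and alpha_small: "(\<lambda>l. real l * alpha_l \<theta> \<omega>0 lam nl l) \<longlonglongrightarrow> 0"
    and gamma_small: "gamma_l \<theta> \<omega>0 lam nl \<longlonglongrightarrow> 0"
    and u_pi: "\<forall>l\<ge>l0. u_l \<theta> \<omega>0 lam nl l pi \<noteq> 0"
    and u_0: "\<exists>c>0. \<forall>l\<ge>l0. \<bar>u_l \<theta> \<omega>0 lam nl l 0\<bar> \<ge> c"
    and ab: "a < b"
  shows "(\<lambda>l. sup_norm_on {a..b} (\<lambda>\<omega>. phi_hat_l \<theta> \<omega>0 lam nl l \<omega> - meyer_phi_hat \<theta> \<omega>0 \<omega>))
           \<in> O(mu_l \<theta> \<omega>0 lam nl)"
proof -
  obtain \<theta>' \<theta>'' where \<theta>': "\<And>x. (\<theta> has_real_derivative \<theta>' x) (at x)"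
    and \<theta>'': "\<And>x. (\<theta>' has_real_derivative \<theta>'' x) (at x)"
    using theta_C2 unfolding C2_fun_def by blast
  have "continuous_on UNIV \<theta>'"
    using \<theta>'' by (meson DERIV_isCont continuous_at_imp_continuous_on)
  then interpret meyer_summation \<theta> \<theta>' \<omega>0 lam nl
    using theta_odd theta_mono theta_const omega0 \<theta>' by unfold_locales auto
  obtain c where c: "0 < c" "\<And>l. l0 \<le> l \<Longrightarrow> c \<le> \<bar>u l 0\<bar>"
    using u_0 by blast
  obtain J :: nat where J: "max \<bar>a\<bar> \<bar>b\<bar> \<le> 2 ^ J"
    using real_arch_pow[of 2 "max \<bar>a\<bar> \<bar>b\<bar>"] by (auto intro: less_imp_le)
  define K where "K = (2 * real J + 2 ^ J) / c"
  have "\<mu> \<longlonglongrightarrow> 0 + 0"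
    unfolding mu_l_def[abs_def] by (intro tendsto_add alpha_small gamma_small)
  then have "eventually (\<lambda>l. \<mu> l < 1) sequentially"
    using order_tendstoD(2) by fastforce
  moreover have "eventually (\<lambda>l. max l0 1 \<le> l) sequentially"
    by (rule eventually_ge_at_top)
  ultimately have "eventually (\<lambda>l. norm (sup_norm_on {a..b} (\<lambda>\<omega>. phi_hat_l \<theta> \<omega>0 lam nl l \<omega> - phi_M \<omega>))
      \<le> K * exp K * norm (\<mu> l)) sequentially"
  proof eventually_elim
    case (elim l)
    then have "l0 \<le> l" "1 \<le> l" "\<mu> l \<le> 1"
      by auto
    from abs_sup_norm_phi_hat_l_minus_meyer_phi_hat_le[OF ab J c(1) c(2)[OF this(1)] this(2,3)]
    show ?case
      using mu_nonneg[of l] by (simp add: K_def)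
  qed
  then show ?thesis
    by (rule bigoI)
qed

end
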